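(* Consider the generative logic with $\mu\to1$ in the setting below. Let $\Omega$ and $\Delta$ be finite multisets of time-indexed formulas such that $E'(\Delta)=\emptyset$. Then $p(\Omega\mid\Delta)=p(\Omega)$.
   Context: Let $\mathcal{L}$ be a propositional language and let $K,T\ge1$. There are data sequences $d_1,\dots,d_K$; repetitions are allowed, and data are identified by their index $k$. Each $d_k$ is associated with a sequence of models $m(d_k)=(m(d_k)^1,\dots,m(d_k)^T)$ of $\mathcal{L}$. The prior is $p(d_k)=1/K$. A time-indexed formula is written $\alpha^t$, with $\alpha\in\mathcal{L}$ and $1\le t\le T$. Write $[\![\alpha^t]\!]_k=1$ if $\alpha$ is true in $m(d_k)^t$, and $0$ otherwise. For $\mu\in(0,1)$ and a finite multiset $X$ of time-indexed formulas, define $$p(X\mid d_k,\mu)=\prod_{\alpha^t\in X}\mu^{[\![\alpha^t]\!]_k}(1-\mu)^{1-[\![\alpha^t]\!]_k}.$$ Then define $$p(\Omega)=\lim_{\mu\to1}\sum_k p(\Omega\mid d_k,\mu)\,p(d_k)$$ and $$p(\Omega\mid\Delta)=\lim_{\mu\to1}\frac{\sum_k p(\Omega\mid d_k,\mu)\,p(\Delta\mid d_k,\mu)\,p(d_k)}{\sum_k p(\Delta\mid d_k,\mu)\,p(d_k)}.$$ An index $k$ is an evidence of $X$ if $[\![\alpha^t]\!]_k=1$ for all $\alpha^t\in X$. Let $E(X)$ be the set of such indices. $X$ is called founded if $E(X)\neq\emptyset$. Let $MFS(\Delta)$ be the set of nonempty founded sub-multisets $S\subseteq\Delta$ that have maximum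 cardinality among all nonempty founded sub-multisets of $\Delta$. Set $E'(\Delta)=\bigcup_{S\in MFS(\Delta)}E(S)$. This union is empty if $MFS(\Delta)=\emptyset$. Thus $E'(\Delta)=\emptyset$ iff no index is an evidence of any singleton of $\Delta$. *)

theory Defs
  imports Complex_Main "HOL-Library.Multiset"
begin

datatype 'v form = Atom 'v | Bot | Neg "'v form" | Conj "'v form" "'v form"
  | Disj "'v form" "'v form" | Imp "'v form" "'v form"

fun holds :: "('v \<Rightarrow> bool) \<Rightarrow> 'v form \<Rightarrow> bool" where
  "holds I (Atom v) = I v"
| "holds I Bot = False"
| "holds I (Neg a) = (\<not> holds I a)"
| "holds I (Conj a b) = (holds I a \<and> holds I b)"
| "holds I (Disj a b) = (holds I a \<or> holds I b)"
| "holds I (Imp a b) = (holds I a \<longrightarrow> holds I b)"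

(* A time-indexed formula alpha^t is a pair (alpha, t).
   m k t is the model m(d_k)^t; data indices are k < K, times 1 \<le> t \<le> T. *)
type_synonym 'v tform = "'v form \<times> nat"

definition sem :: "(nat \<Rightarrow> nat \<Rightarrow> ('v \<Rightarrow> bool)) \<Rightarrow> nat \<Rightarrow> 'v tform \<Rightarrow> nat" where
  "sem m k x = (if holds (m k (snd x)) (fst x) then 1 else 0)"

definition lik :: "(nat \<Rightarrow> nat \<Rightarrow> ('v \<Rightarrow> bool)) \<Rightarrow> 'v tform multiset \<Rightarrow> nat \<Rightarrow> real \<Rightarrow> real" where
  "lik m X k \<mu> = (\<Prod>x\<in>#X. \<mu> ^ sem m k x * (1 - \<mu>) ^ (1 - sem m k x))"

definition marg :: "nat \<Rightarrow> (nat \<Rightarrow> nat \<Rightarrow> ('v \<Rightarrow> bool)) \<Rightarrow> 'v tform multiset \<Rightarrow> real \<Rightarrow> real" where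
  "marg K m X \<mu> = (\<Sum>k<K. lik m X k \<mu> * (1 / real K))"

definition joint :: "nat \<Rightarrow> (nat \<Rightarrow> nat \<Rightarrow> ('v \<Rightarrow> bool)) \<Rightarrow> 'v tform multiset \<Rightarrow> 'v tform multiset \<Rightarrow> real \<Rightarrow> real" where
  "joint K m \<Omega> \<Delta> \<mu> = (\<Sum>k<K. lik m \<Omega> k \<mu> * lik m \<Delta> k \<mu> * (1 / real K))"

definition Ev :: "nat \<Rightarrow> (nat \<Rightarrow> nat \<Rightarrow> ('v \<Rightarrow> bool)) \<Rightarrow> 'v tform multiset \<Rightarrow> nat set" where
  "Ev K m X = {k. k < K \<and> (\<forall>x\<in>#X. sem m k x = 1)}"

definition founded :: "nat \<Rightarrow> (nat \<Rightarrow> nat \<Rightarrow> ('v \<Rightarrow> bool)) \<Rightarrow> 'v tform multiset \<Rightarrow> bool" where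
  "founded K m X \<longleftrightarrow> Ev K m X \<noteq> {}"

definition MFS :: "nat \<Rightarrow> (nat \<Rightarrow> nat \<Rightarrow> ('v \<Rightarrow> bool)) \<Rightarrow> 'v tform multiset \<Rightarrow> 'v tform multiset set" where
  "MFS K m \<Delta> = {S. S \<subseteq># \<Delta> \<and> S \<noteq> {#} \<and> founded K m S \<and>
      (\<forall>S'. S' \<subseteq># \<Delta> \<and> S' \<noteq> {#} \<and> founded K m S' \<longrightarrow> size S' \<le> size S)}"

definition Ev' :: "nat \<Rightarrow> (nat \<Rightarrow> nat \<Rightarrow> ('v \<Rightarrow> bool)) \<Rightarrow> 'v tform multiset \<Rightarrow> nat set" where
  "Ev' K m \<Delta> = (\<Union>S\<in>MFS K m \<Delta>. Ev K m S)"

end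

theory Submission
  imports Defs
begin

(* If E'(Delta) is empty, no formula of Delta holds in any model, so p(Delta | d_k, mu) =
   (1 - mu)^|Delta| is the same for every datum k.  This factor cancels from the quotient
   defining p(Omega | Delta), which therefore coincides with the marginal of Omega for all
   mu < 1; the marginal is a polynomial in mu, so both sides have the same limit at 1. *)

lemma sem_eq_0_or_1: "sem m k x = 0 \<or> sem m k x = 1"
  by (simp add: sem_def)

lemma MFS_nonempty:
  assumes "S \<subseteq># \<Delta>" and "S \<noteq> {#}" and "founded K m S"
  shows "MFS K m \<Delta> \<noteq> {}"
proof -
  let ?P = "\<lambda>S. S \<subseteq># \<Delta> \<and> S \<noteq> {#} \<and> founded K m S"
  have "\<forall>S. ?P S \<longrightarrow> size S < Suc (size \<Delta>)"
    by (auto dest: size_mset_mono)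
  from ex_has_greatest_nat[of ?P S, OF _ this] assms
  obtain S' where "?P S'" and "\<forall>S. ?P S \<longrightarrow> size S \<le> size S'"
    by blast
  then have "S' \<in> MFS K m \<Delta>"
    by (auto simp: MFS_def)
  then show ?thesis
    by blast
qed

lemma sem_eq_0_if_Ev'_empty:
  assumes "Ev' K m \<Delta> = {}" and "k < K" and "x \<in># \<Delta>"
  shows "sem m k x = 0"
proof (rule ccontr)
  assume "sem m k x \<noteq> 0"
  then have "sem m k x = 1"
    using sem_eq_0_or_1 by metis
  then have "k \<in> Ev K m {#x#}"
    using \<open>k < K\<close> by (simp add: Ev_def)
  then have founded: "founded K m {#x#}"
    by (auto simp: founded_def)
  obtain S where S: "S \<in> MFS K m \<Delta>"
    using MFS_nonempty[OF _ _ founded] \<open>x \<in># \<Delta>\<close> by auto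
  then have "Ev K m S \<noteq> {}"
    by (simp add: MFS_def founded_def)
  with S \<open>Ev' K m \<Delta> = {}\<close> show False
    by (auto simp: Ev'_def)
qed

lemma lik_if_all_false:
  assumes "\<forall>x\<in>#X. sem m k x = 0"
  shows "lik m X k \<mu> = (1 - \<mu>) ^ size X"
  using assms by (induction X) (auto simp: lik_def)

lemma isCont_lik: "isCont (lik m X k) a"
proof (induction X)
  case empty
  then show ?case
    by (simp add: lik_def)
next
  case (add x X)
  have "lik m (add_mset x X) k = (\<lambda>\<mu>. \<mu> ^ sem m k x * (1 - \<mu>) ^ (1 - sem m k x) * lik m X k \<mu>)"
    by (simp add: lik_def fun_eq_iff)
  with add show ?case
    by (simp add: continuous_intros)
qed

lemma isCont_marg: "isCont (marg K m X) a"
  unfolding marg_def[abs_def] by (intro continuous_intros isCont_lik)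

lemma tendsto_marg_at_left: "(marg K m X \<longlongrightarrow> marg K m X a) (at_left a)"
  using isCont_marg[unfolded isCont_def] by (blast intro: filterlim_at_split[THEN iffD1, THEN conjunct1])

lemma joint_div_marg_if_lik_const:
  assumes "K > 0" and "c \<noteq> 0" and "\<forall>k<K. lik m \<Delta> k \<mu> = c"
  shows "joint K m \<Omega> \<Delta> \<mu> / marg K m \<Delta> \<mu> = marg K m \<Omega> \<mu>"
proof -
  have "joint K m \<Omega> \<Delta> \<mu> = c * marg K m \<Omega> \<mu>"
    unfolding joint_def marg_def sum_distrib_left
    by (rule sum.cong) (simp_all add: assms(3))
  moreover have "marg K m \<Delta> \<mu> = c"
    using assms by (simp add: marg_def)
  ultimately show ?thesis
    using \<open>c \<noteq> 0\<close> by simp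
qed

theorem theorem2:
  fixes K T :: nat and m :: "nat \<Rightarrow> nat \<Rightarrow> ('v \<Rightarrow> bool)"
    and \<Omega> \<Delta> :: "'v tform multiset"
  assumes "K \<ge> 1" and "T \<ge> 1"
    and "\<forall>x\<in>#\<Omega>. 1 \<le> snd x \<and> snd x \<le> T"
    and "\<forall>x\<in>#\<Delta>. 1 \<le> snd x \<and> snd x \<le> T"
    and "Ev' K m \<Delta> = {}"
  shows "\<exists>L. (marg K m \<Omega> \<longlongrightarrow> L) (at_left 1) \<and>
             ((\<lambda>\<mu>. joint K m \<Omega> \<Delta> \<mu> / marg K m \<Delta> \<mu>) \<longlongrightarrow> L) (at_left 1)"
proof (intro exI conjI)
  show lim: "(marg K m \<Omega> \<longlongrightarrow> marg K m \<Omega> 1) (at_left 1)"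
    by (rule tendsto_marg_at_left)
  have lik_\<Delta>: "\<forall>k<K. lik m \<Delta> k \<mu> = (1 - \<mu>) ^ size \<Delta>" for \<mu> :: real
    using sem_eq_0_if_Ev'_empty[OF assms(5)] lik_if_all_false by blast
  have "\<forall>\<^sub>F \<mu> in at_left (1::real). marg K m \<Omega> \<mu> = joint K m \<Omega> \<Delta> \<mu> / marg K m \<Delta> \<mu>"
  proof (rule eventually_at_leftI[of 0])
    fix \<mu> :: real
    assume "\<mu> \<in> {0<..<1}"
    then have "(1 - \<mu>) ^ size \<Delta> \<noteq> 0"
      by simp
    from joint_div_marg_if_lik_const[OF _ this lik_\<Delta>] assms(1)
    show "marg K m \<Omega> \<mu> = joint K m \<Omega> \<Delta> \<mu> / marg K m \<Delta> \<mu>"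
      by simp
  qed simp
  with lim show "((\<lambda>\<mu>. joint K m \<Omega> \<Delta> \<mu> / marg K m \<Delta> \<mu>) \<longlongrightarrow> marg K m \<Omega> 1) (at_left 1)"
    by (rule Lim_transform_eventually)
qed

end
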